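(* Let $\rho$ be a qubit state and write $p_{00}=\langle 0|\rho|0\rangle$, $p_{01}=\langle 0|\rho|1\rangle$ in the eigenbasis $\{|0\rangle,|1\rangle\}$ of $L=|1\rangle\langle 1|$. Let $L_{AB}=L\otimes\mathbb{I}+\mathbb{I}\otimes L$ on two qubits $A,B$. Define $$\Delta M_A^{(1)}:=\max_{V_{AB}} M^{(1)}(\sigma_A)-M^{(1)}(\rho),\qquad \sigma_A=\mathrm{tr}_B\big[V_{AB}(\rho\otimes\rho)V_{AB}^\dagger\big],$$ where the maximum is over all unitaries $V_{AB}$ with $[V_{AB},L_{AB}]=0$. Then $$\Delta M_A^{(1)}=|p_{01}|\Big(\sqrt{1+(2p_{00}-1)^2}-1\Big),$$ and this maximum is achieved by the unitary that acts as the identity on $|00\rangle$ and $|11\rangle$ and, on the degenerate subspace spanned by $\{|01\rangle,|10\rangle\}$, acts as the rotation $|01\rangle\mapsto\cos\theta|01\rangle+\sin\theta|10\rangle$, $|10\rangle\mapsto-\sin\theta|01\rangle+\cos\theta|10\rangle$ with $\cos\theta=1/\sqrt{1+(2p_{00}-1)^2}$ and $\sin\theta=(2p_{00}-1)/\sqrt{1+(2p_{00}-1)^2}$ (i.e. $\theta=\cos^{-1}\big(1/\sqrt{1+(2p_{00}-1)^2}\big)$ up to this sign convention).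
   Context: For a qubit with $L=|1\rangle\langle1|$, the first mode of an operator $\rho$ is $\rho^{(1)}=|1\rangle\langle1|\rho|0\rangle\langle0|$, and the coherence measure is $M^{(1)}(\rho):=\|\rho^{(1)}\|_1$ (trace norm), so that $M^{(1)}(\rho)=|p_{01}|$. Unitaries commuting with $L_{AB}$ are called allowed unitaries. *)

theory Defs
  imports "HOL-Analysis.Analysis"
begin

text \<open>Qubit operators are 2x2 complex matrices indexed by the type 2 (basis |0>, |1>);
two-qubit operators are indexed by 2 \<times> 2, the pair (a,b) standing for |ab>.
Entry A $ i $ j is the matrix element <i|A|j>.\<close>

type_synonym qop = "complex^2^2"
type_synonym qop2 = "complex^(2 \<times> 2)^(2 \<times> 2)"

definition mat_adj :: "complex^'n^'n \<Rightarrow> complex^'n^'n" where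
  "mat_adj A = (\<chi> i j. cnj (A $ j $ i))"

definition cunitary :: "complex^'n^'n \<Rightarrow> bool" where
  "cunitary U \<longleftrightarrow> U ** mat_adj U = mat 1 \<and> mat_adj U ** U = mat 1"

definition cinner :: "complex^'n \<Rightarrow> complex^'n \<Rightarrow> complex" where
  "cinner v w = (\<Sum>i\<in>UNIV. cnj (v $ i) * w $ i)"

definition psd :: "complex^'n^'n \<Rightarrow> bool" where
  "psd A \<longleftrightarrow> (\<forall>v. Im (cinner v (A *v v)) = 0 \<and> Re (cinner v (A *v v)) \<ge> 0)"

definition density :: "complex^'n^'n \<Rightarrow> bool" where
  "density \<rho> \<longleftrightarrow> psd \<rho> \<and> trace \<rho> = 1"

definition trace_norm :: "complex^'n^'n \<Rightarrow> real" where
  "trace_norm A = Re (trace (THE S. psd S \<and> S ** S = mat_adj A ** A))"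

definition proj :: "2 \<Rightarrow> qop" where
  "proj k = (\<chi> i j. if i = k \<and> j = k then 1 else 0)"

definition Lop :: qop where "Lop = proj 1"

definition tensor :: "qop \<Rightarrow> qop \<Rightarrow> qop2" where
  "tensor A B = (\<chi> p q. A $ fst p $ fst q * B $ snd p $ snd q)"

definition LAB :: qop2 where
  "LAB = tensor Lop (mat 1) + tensor (mat 1) Lop"

definition allowed :: "qop2 \<Rightarrow> bool" where
  "allowed V \<longleftrightarrow> cunitary V \<and> V ** LAB = LAB ** V"

definition ptrace_B :: "qop2 \<Rightarrow> qop" where
  "ptrace_B X = (\<chi> i k. \<Sum>j\<in>UNIV. X $ (i, j) $ (k, j))"

definition mode1 :: "qop \<Rightarrow> qop" where
  "mode1 \<rho> = proj 1 ** \<rho> ** proj 0"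

definition M1 :: "qop \<Rightarrow> real" where
  "M1 \<rho> = trace_norm (mode1 \<rho>)"

definition sigmaA :: "qop \<Rightarrow> qop2 \<Rightarrow> qop" where
  "sigmaA \<rho> V = ptrace_B (V ** tensor \<rho> \<rho> ** mat_adj V)"

definition rotV :: "real \<Rightarrow> real \<Rightarrow> qop2" where
  "rotV c s = (\<chi> p q.
     if p = q \<and> (p = (0,0) \<or> p = (1,1)) then 1
     else if p = (0,1) \<and> q = (0,1) then complex_of_real c
     else if p = (1,0) \<and> q = (0,1) then complex_of_real s
     else if p = (0,1) \<and> q = (1,0) then complex_of_real (- s)
     else if p = (1,0) \<and> q = (1,0) then complex_of_real c
     else 0)"

end

theory Submission
  imports Defs
begin

(* An allowed unitary commutes with the diagonal operator L_AB, hence is block diagonal on the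
   eigenspaces span{|00>}, span{|01>,|10>}, span{|11>}: two phases and a 2x2 unitary block W.
   For every qubit operator X one has M^(1)(X) = |X_10|, and the partial trace gives
   (sigma_A)_10 = rho_10 (p00 e u + p11 f conj w) with |e| = |f| = 1, where u, w are the row sums
   of W, i.e. the entries of W (1,1)^T, so |u|^2 + |w|^2 = 2. The triangle and Cauchy-Schwarz
   inequalities bound |(sigma_A)_10| by |p01| sqrt (2 (p00^2 + p11^2)), which equals
   |p01| sqrt (1 + (2 p00 - 1)^2), and the rotation attains the bound because its row sums
   (c + s, c - s) are proportional to (p00, p11). *)

lemma UNIV_2_eq_0_1: "(UNIV :: 2 set) = {0, 1}"
proof -
  have "x = 0 \<or> x = 1" for x :: 2
    using exhaust_2[of x] by auto
  then show ?thesis by auto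
qed

lemma forall_2_0_1: "(\<forall>i::2. P i) \<longleftrightarrow> P 0 \<and> P 1"
  by (metis UNIV_2_eq_0_1 UNIV_I insertE empty_iff)

lemma sum_2_0_1: "(\<Sum>i\<in>UNIV. f i) = f (0::2) + f 1"
  by (simp add: UNIV_2_eq_0_1)

lemma UNIV_2x2: "(UNIV :: (2 \<times> 2) set) = {(0,0), (0,1), (1,0), (1,1)}"
  by (auto simp: UNIV_Times_UNIV[symmetric] UNIV_2_eq_0_1 simp del: UNIV_Times_UNIV)

lemma sum_2x2: "(\<Sum>p\<in>UNIV. f p) = f (0::2, 0::2) + f (0,1) + f (1,0) + f (1,1)"
  by (simp add: UNIV_2x2 algebra_simps)

lemma forall_2x2: "(\<forall>p::2\<times>2. P p) \<longleftrightarrow> P (0,0) \<and> P (0,1) \<and> P (1,0) \<and> P (1,1)"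
  by (metis UNIV_2x2 UNIV_I insertE empty_iff)

lemma qop_eq_iff:
  "(A :: qop) = B \<longleftrightarrow> A$0$0 = B$0$0 \<and> A$0$1 = B$0$1 \<and> A$1$0 = B$1$0 \<and> A$1$1 = B$1$1"
  by (simp add: vec_eq_iff forall_2_0_1)

lemma qop_mult_entry: "((A :: qop) ** B) $ i $ j = A$i$0 * B$0$j + A$i$1 * B$1$j"
  by (simp add: matrix_matrix_mult_def sum_2_0_1)

lemma commute_diagonal_iff:
  fixes V :: "'a::comm_ring_1^'n^'n"
  shows "V ** (\<chi> i j. if i = j then d i else 0) = (\<chi> i j. if i = j then d i else 0) ** V
     \<longleftrightarrow> (\<forall>i j. V $ i $ j * (d j - d i) = 0)"
  by (simp add: vec_eq_iff matrix_matrix_mult_def if_distrib[where f = "\<lambda>x. x * _"]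
      if_distrib[where f = "\<lambda>x. _ * x"] algebra_simps cong: if_cong)

lemma cunitary_columns_orthonormal:
  assumes "cunitary U"
  shows "(\<Sum>k\<in>UNIV. cnj (U $ k $ i) * U $ k $ j) = (if i = j then 1 else 0)"
  using arg_cong[where f = "\<lambda>M. M $ i $ j", OF conjunct2[OF assms[unfolded cunitary_def]]]
  by (simp add: matrix_matrix_mult_def mat_adj_def mat_def)

lemma cmod_eq_1_if_cnj_mult_self:
  assumes "cnj z * z = 1"
  shows "cmod z = 1"
proof -
  have "complex_of_real ((cmod z)\<^sup>2) = 1"
    using assms by (metis complex_norm_square mult.commute)
  then have "(cmod z)\<^sup>2 = 1"
    by (metis of_real_eq_1_iff)
  then show ?thesis
    using norm_ge_zero[of z] by (auto simp: power2_eq_1_iff)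
qed

definition LAB_eigenvalue :: "2 \<times> 2 \<Rightarrow> complex" where
  "LAB_eigenvalue p = (if fst p = 1 then 1 else 0) + (if snd p = 1 then 1 else 0)"

lemma LAB_eq_diagonal: "LAB = (\<chi> p q. if p = q then LAB_eigenvalue p else 0)"
  unfolding vec_eq_iff forall_2x2
  by (simp add: LAB_def tensor_def Lop_def proj_def mat_def LAB_eigenvalue_def)

definition LAB_block_diagonal :: "qop2 \<Rightarrow> bool" where
  "LAB_block_diagonal V \<longleftrightarrow> (\<forall>p q. LAB_eigenvalue p \<noteq> LAB_eigenvalue q \<longrightarrow> V $ p $ q = 0)"

lemma allowed_iff: "allowed V \<longleftrightarrow> cunitary V \<and> LAB_block_diagonal V"
  unfolding allowed_def LAB_block_diagonal_def LAB_eq_diagonal commute_diagonal_iff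
  by (metis mult_eq_0_iff right_minus_eq)

lemma LAB_block_diagonal_entry_eq_0:
  "LAB_block_diagonal V \<Longrightarrow> LAB_eigenvalue p \<noteq> LAB_eigenvalue q \<Longrightarrow> V $ p $ q = 0"
  unfolding LAB_block_diagonal_def by blast

lemma allowed_diagonal_phases:
  assumes "allowed V"
  shows "cmod (V$(0,0)$(0,0)) = 1" "cmod (V$(1,1)$(1,1)) = 1"
proof -
  have block: "LAB_block_diagonal V" and unitary: "cunitary V"
    using assms allowed_iff by auto
  note zero = LAB_block_diagonal_entry_eq_0[OF block]
  show "cmod (V$(0,0)$(0,0)) = 1" "cmod (V$(1,1)$(1,1)) = 1"
    using cunitary_columns_orthonormal[OF unitary, of "(0,0)" "(0,0)"]
      cunitary_columns_orthonormal[OF unitary, of "(1,1)" "(1,1)"]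
    by (simp_all add: sum_2x2 zero LAB_eigenvalue_def cmod_eq_1_if_cnj_mult_self)
qed

lemma allowed_block_row_sums:
  assumes "allowed V"
  shows "(cmod (V$(0,1)$(0,1) + V$(0,1)$(1,0)))\<^sup>2 + (cmod (V$(1,0)$(0,1) + V$(1,0)$(1,0)))\<^sup>2 = 2"
proof -
  have block: "LAB_block_diagonal V" and unitary: "cunitary V"
    using assms allowed_iff by auto
  note zero = LAB_block_diagonal_entry_eq_0[OF block]
  define a b c d
    where entries: "a = V$(0,1)$(0,1)" "b = V$(0,1)$(1,0)" "c = V$(1,0)$(0,1)" "d = V$(1,0)$(1,0)"
  have col1: "cnj a * a + cnj c * c = 1" and col2: "cnj b * b + cnj d * d = 1"
    and cross: "cnj a * b + cnj c * d = 0"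
    using cunitary_columns_orthonormal[OF unitary, of "(0,1)" "(0,1)"]
      cunitary_columns_orthonormal[OF unitary, of "(1,0)" "(1,0)"]
      cunitary_columns_orthonormal[OF unitary, of "(0,1)" "(1,0)"]
    by (simp_all add: sum_2x2 zero LAB_eigenvalue_def entries)
  have "complex_of_real ((cmod (a + b))\<^sup>2 + (cmod (c + d))\<^sup>2)
      = (cnj a * a + cnj c * c) + (cnj b * b + cnj d * d) + (cnj a * b + cnj c * d)
        + cnj (cnj a * b + cnj c * d)"
    by (simp only: of_real_add complex_norm_square) (simp add: algebra_simps)
  also have "\<dots> = complex_of_real 2"
    using col1 col2 cross by simp
  finally show ?thesis
    unfolding entries[symmetric] by (simp only: of_real_eq_iff)
qed

lemma psd_qop_entries:
  assumes "psd (A :: qop)"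
  shows "A$0$1 = cnj (A$1$0)" "Im (A$0$0) = 0" "Re (A$0$0) \<ge> 0" "Im (A$1$1) = 0" "Re (A$1$1) \<ge> 0"
proof -
  have form: "cinner v (A *v v)
      = cnj (v$0) * (A$0$0 * v$0 + A$0$1 * v$1) + cnj (v$1) * (A$1$0 * v$0 + A$1$1 * v$1)" for v
    by (simp add: cinner_def matrix_vector_mult_def sum_2_0_1)
  have nonneg: "Im (cinner v (A *v v)) = 0 \<and> Re (cinner v (A *v v)) \<ge> 0" for v
    using assms psd_def by blast
  define e :: "complex \<Rightarrow> complex \<Rightarrow> complex^2"
    where "e x y = (\<chi> i. if i = 0 then x else y)" for x y
  note at = nonneg[of "e 1 0", unfolded form] nonneg[of "e 0 1", unfolded form]
    nonneg[of "e 1 1", unfolded form] nonneg[of "e 1 \<i>", unfolded form]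
  show "Im (A$0$0) = 0" "Re (A$0$0) \<ge> 0" "Im (A$1$1) = 0" "Re (A$1$1) \<ge> 0"
    using at(1,2) by (simp_all add: e_def)
  show "A$0$1 = cnj (A$1$0)"
    using at by (simp add: e_def complex_eq_iff)
qed

lemma density_qop_entries:
  assumes "density (\<rho> :: qop)"
  shows "\<rho>$0$0 = of_real (Re (\<rho>$0$0))" "\<rho>$1$1 = of_real (1 - Re (\<rho>$0$0))"
    "0 \<le> Re (\<rho>$0$0)" "Re (\<rho>$0$0) \<le> 1" "cmod (\<rho>$1$0) = cmod (\<rho>$0$1)"
proof -
  have psd: "psd \<rho>" and "trace \<rho> = 1"
    using assms density_def by auto
  then have trace: "\<rho>$0$0 + \<rho>$1$1 = 1"
    by (simp add: trace_def sum_2_0_1)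
  note entries = psd_qop_entries[OF psd]
  show "\<rho>$0$0 = of_real (Re (\<rho>$0$0))"
    using entries(2) by (simp add: complex_eq_iff)
  show "\<rho>$1$1 = of_real (1 - Re (\<rho>$0$0))"
    using trace entries(4) by (simp add: complex_eq_iff)
  show "0 \<le> Re (\<rho>$0$0)" "Re (\<rho>$0$0) \<le> 1"
    using trace entries(3,5) by (auto simp: complex_eq_iff)
  show "cmod (\<rho>$1$0) = cmod (\<rho>$0$1)"
    by (simp add: entries(1))
qed

lemma psd_scaleR_proj0:
  assumes "t \<ge> 0"
  shows "psd (t *\<^sub>R proj 0)"
proof -
  have "cinner v ((t *\<^sub>R proj 0) *v v) = of_real (t * (cmod (v$0))\<^sup>2)" for v
    by (simp add: cinner_def matrix_vector_mult_def sum_2_0_1 proj_def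
        scaleR_conv_of_real[where 'a = complex] complex_norm_square mult.commute mult.left_commute
        del: of_real_power)
  then show ?thesis
    using assms by (simp add: psd_def)
qed

lemma proj0_scaleR_entries:
  "(t *\<^sub>R proj 0) $ 0 $ 0 = complex_of_real t" "(t *\<^sub>R proj 0) $ 0 $ 1 = 0"
  "(t *\<^sub>R proj 0) $ 1 $ 0 = 0" "(t *\<^sub>R proj 0) $ 1 $ 1 = 0"
  by (simp_all add: proj_def of_real_def)

lemma psd_sqrt_scaleR_proj0_unique:
  assumes "psd S" "S ** S = t\<^sup>2 *\<^sub>R proj 0" "t \<ge> 0"
  shows "S = t *\<^sub>R proj 0"
proof -
  note entries = psd_qop_entries[OF assms(1)]
  define x y where "x = Re (S$0$0)" and "y = Re (S$1$1)"
  have x: "S$0$0 = of_real x" "x \<ge> 0" and y: "S$1$1 = of_real y" "y \<ge> 0"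
    using entries(2-5) by (simp_all add: x_def y_def complex_eq_iff)
  have "complex_of_real ((cmod (S$1$0))\<^sup>2 + y * y) = S$1$0 * S$0$1 + S$1$1 * S$1$1"
    by (simp only: of_real_add complex_norm_square) (simp add: entries(1) y)
  also have "\<dots> = 0"
    using arg_cong[where f = "\<lambda>M. M $ 1 $ 1", OF assms(2)]
    by (simp add: qop_mult_entry proj0_scaleR_entries del: vector_scaleR_component)
  finally have "(cmod (S$1$0))\<^sup>2 + y * y = 0"
    by (simp only: of_real_eq_0_iff)
  then have off: "S$1$0 = 0" and "y = 0"
    by (simp_all add: add_nonneg_eq_0_iff y(2))
  have "complex_of_real (x * x) = S$0$0 * S$0$0 + S$0$1 * S$1$0"
    by (simp add: x off)
  also have "\<dots> = of_real (t\<^sup>2)"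
    using arg_cong[where f = "\<lambda>M. M $ 0 $ 0", OF assms(2)]
    by (simp add: qop_mult_entry proj0_scaleR_entries del: vector_scaleR_component)
  finally have "x * x = t\<^sup>2"
    by (simp only: of_real_eq_iff)
  then have "x = t"
    using x(2) assms(3) by (metis power2_eq_square power2_eq_iff_nonneg)
  then show ?thesis
    using x y \<open>y = 0\<close> off entries(1)
    by (simp add: qop_eq_iff proj0_scaleR_entries del: vector_scaleR_component)
qed

lemma trace_norm_lower_corner:
  assumes "(A :: qop)$0$0 = 0" "A$0$1 = 0" "A$1$1 = 0"
  shows "trace_norm A = cmod (A$1$0)"
proof -
  let ?t = "cmod (A$1$0)"
  have "mat_adj A ** A = ?t\<^sup>2 *\<^sub>R proj 0"
    using assms by (simp add: qop_eq_iff qop_mult_entry mat_adj_def proj0_scaleR_entries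
        complex_norm_square mult.commute del: of_real_power vector_scaleR_component)
  moreover have "(?t *\<^sub>R proj 0) ** (?t *\<^sub>R proj 0) = ?t\<^sup>2 *\<^sub>R proj 0"
    by (simp add: qop_eq_iff qop_mult_entry proj0_scaleR_entries power2_eq_square
        del: vector_scaleR_component)
  ultimately have "(THE S. psd S \<and> S ** S = mat_adj A ** A) = ?t *\<^sub>R proj 0"
    using psd_scaleR_proj0 psd_sqrt_scaleR_proj0_unique by (intro the_equality) auto
  then show ?thesis
    by (simp add: trace_norm_def trace_def sum_2_0_1 proj0_scaleR_entries
        del: vector_scaleR_component)
qed

lemma M1_eq_cmod: "M1 X = cmod (X$1$0)"
proof -
  have "mode1 X $ 0 $ 0 = 0" "mode1 X $ 0 $ 1 = 0" "mode1 X $ 1 $ 1 = 0" "mode1 X $ 1 $ 0 = X$1$0"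
    by (simp_all add: mode1_def qop_mult_entry proj_def)
  then show ?thesis
    unfolding M1_def by (simp add: trace_norm_lower_corner)
qed

lemma sigmaA_entry_10:
  assumes "LAB_block_diagonal V"
  shows "sigmaA \<rho> V $ 1 $ 0 = \<rho>$1$0 *
    (\<rho>$0$0 * cnj (V$(0,0)$(0,0)) * (V$(1,0)$(0,1) + V$(1,0)$(1,0))
     + \<rho>$1$1 * V$(1,1)$(1,1) * cnj (V$(0,1)$(0,1) + V$(0,1)$(1,0)))"
  by (simp add: sigmaA_def ptrace_B_def matrix_matrix_mult_def sum_2x2 sum_2_0_1 mat_adj_def
      tensor_def LAB_block_diagonal_entry_eq_0[OF assms] LAB_eigenvalue_def algebra_simps)

lemma M1_sigmaA_le:
  assumes "allowed V" "density \<rho>"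
  shows "M1 (sigmaA \<rho> V) \<le> cmod (\<rho>$0$1) * sqrt (1 + (2 * Re (\<rho>$0$0) - 1)\<^sup>2)"
proof -
  define a where "a = Re (\<rho>$0$0)"
  define u w where "u = V$(1,0)$(0,1) + V$(1,0)$(1,0)" and "w = V$(0,1)$(0,1) + V$(0,1)$(1,0)"
  note \<rho> = density_qop_entries[OF assms(2), folded a_def]
  note phases = allowed_diagonal_phases[OF assms(1)]
  have "M1 (sigmaA \<rho> V) = cmod (\<rho>$0$1) *
      cmod (of_real a * cnj (V$(0,0)$(0,0)) * u + of_real (1 - a) * V$(1,1)$(1,1) * cnj w)"
    using assms(1) by (simp add: M1_eq_cmod sigmaA_entry_10 allowed_iff \<rho> u_def w_def norm_mult)
  also have "\<dots> \<le> cmod (\<rho>$0$1) * (a * cmod u + (1 - a) * cmod w)"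
  proof -
    have "cmod (of_real a * cnj (V$(0,0)$(0,0)) * u) = a * cmod u"
      using \<rho>(3) phases(1) by (simp add: norm_mult)
    moreover have "cmod (of_real (1 - a) * V$(1,1)$(1,1) * cnj w) = (1 - a) * cmod w"
      using \<rho>(4) phases(2) by (simp add: norm_mult del: of_real_diff)
    ultimately show ?thesis
      by (intro mult_left_mono norm_triangle_le) simp_all
  qed
  also have "\<dots> \<le> cmod (\<rho>$0$1) * (sqrt (a\<^sup>2 + (1 - a)\<^sup>2) * sqrt ((cmod u)\<^sup>2 + (cmod w)\<^sup>2))"
    using norm_cauchy_schwarz[of "(a, 1 - a)" "(cmod u, cmod w)"]
    by (intro mult_left_mono) (simp_all add: inner_Pair norm_Pair)
  also have "sqrt (a\<^sup>2 + (1 - a)\<^sup>2) * sqrt ((cmod u)\<^sup>2 + (cmod w)\<^sup>2) = sqrt (1 + (2 * a - 1)\<^sup>2)"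
    using allowed_block_row_sums[OF assms(1), folded u_def w_def]
    by (simp add: real_sqrt_mult[symmetric] add.commute power2_eq_square algebra_simps)
  finally show ?thesis
    unfolding a_def .
qed

lemma rotV_LAB_block_diagonal: "LAB_block_diagonal (rotV c s)"
  by (simp add: LAB_block_diagonal_def forall_2x2 rotV_def LAB_eigenvalue_def)

lemma allowed_rotV:
  assumes "c\<^sup>2 + s\<^sup>2 = 1"
  shows "allowed (rotV c s)"
proof -
  have cs: "complex_of_real c * of_real c + of_real s * of_real s = 1"
    using assms by (metis of_real_add of_real_mult of_real_1 power2_eq_square)
  then have sc: "complex_of_real s * of_real s + of_real c * of_real c = 1"
    by (simp add: add.commute)
  have "cunitary (rotV c s)"
    unfolding cunitary_def vec_eq_iff forall_2x2
    by (simp add: matrix_matrix_mult_def sum_2x2 rotV_def mat_adj_def mat_def cs sc)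
  then show ?thesis
    by (simp add: allowed_iff rotV_LAB_block_diagonal)
qed

lemma M1_sigmaA_rotV:
  assumes "density \<rho>" and N: "N = sqrt (1 + (2 * Re (\<rho>$0$0) - 1)\<^sup>2)"
  shows "M1 (sigmaA \<rho> (rotV (1 / N) ((2 * Re (\<rho>$0$0) - 1) / N))) = cmod (\<rho>$0$1) * N"
proof -
  define a where "a = Re (\<rho>$0$0)"
  define c s where "c = 1 / N" and "s = (2 * a - 1) / N"
  note \<rho> = density_qop_entries[OF assms(1), folded a_def]
  have "N > 0" and "N * N = 1 + (2 * a - 1)\<^sup>2"
    unfolding N a_def by (simp_all add: add_pos_nonneg)
  then have coefficient: "a * (c + s) + (1 - a) * (c - s) = N"
    unfolding c_def s_def by (simp add: field_simps power2_eq_square)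
  have "sigmaA \<rho> (rotV c s) $ 1 $ 0 = \<rho>$1$0 * of_real (a * (c + s) + (1 - a) * (c - s))"
    by (simp add: sigmaA_entry_10 rotV_LAB_block_diagonal \<rho>(1,2))
      (simp add: rotV_def algebra_simps)
  then have "sigmaA \<rho> (rotV c s) $ 1 $ 0 = \<rho>$1$0 * of_real N"
    by (simp only: coefficient)
  then show ?thesis
    using \<open>N > 0\<close> unfolding c_def s_def a_def by (simp add: M1_eq_cmod norm_mult \<rho>(5))
qed

theorem mainTheorem2:
  fixes \<rho> :: qop
  assumes "density \<rho>"
  defines "p00 \<equiv> Re (\<rho> $ 0 $ 0)"
    and "p01 \<equiv> \<rho> $ 0 $ 1"
  defines "c \<equiv> 1 / sqrt (1 + (2 * p00 - 1)\<^sup>2)"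
    and "s \<equiv> (2 * p00 - 1) / sqrt (1 + (2 * p00 - 1)\<^sup>2)"
  shows "allowed (rotV c s)
    \<and> (\<forall>V. allowed V \<longrightarrow> M1 (sigmaA \<rho> V) \<le> M1 (sigmaA \<rho> (rotV c s)))
    \<and> (SUP V\<in>{V. allowed V}. M1 (sigmaA \<rho> V)) - M1 \<rho>
        = cmod p01 * (sqrt (1 + (2 * p00 - 1)\<^sup>2) - 1)
    \<and> M1 (sigmaA \<rho> (rotV c s)) - M1 \<rho>
        = cmod p01 * (sqrt (1 + (2 * p00 - 1)\<^sup>2) - 1)"
proof -
  define N where "N = sqrt (1 + (2 * p00 - 1)\<^sup>2)"
  have "N > 0" and "N\<^sup>2 = 1 + (2 * p00 - 1)\<^sup>2"
    unfolding N_def by (simp_all add: add_pos_nonneg)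
  have "c\<^sup>2 + s\<^sup>2 = (1 + (2 * p00 - 1)\<^sup>2) / N\<^sup>2"
    unfolding c_def s_def N_def[symmetric] by (simp add: power_divide add_divide_distrib)
  also have "\<dots> = 1"
    using \<open>N > 0\<close> by (simp flip: \<open>N\<^sup>2 = 1 + (2 * p00 - 1)\<^sup>2\<close>)
  finally have rotV_allowed: "allowed (rotV c s)"
    by (rule allowed_rotV)
  have attained: "M1 (sigmaA \<rho> (rotV c s)) = cmod p01 * N"
    using M1_sigmaA_rotV[OF assms(1)] unfolding c_def s_def N_def p00_def p01_def by blast
  have optimal: "\<forall>V. allowed V \<longrightarrow> M1 (sigmaA \<rho> V) \<le> M1 (sigmaA \<rho> (rotV c s))"
    using M1_sigmaA_le[OF _ assms(1)] attained unfolding N_def p00_def p01_def by simp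
  have "(SUP V\<in>{V. allowed V}. M1 (sigmaA \<rho> V)) = M1 (sigmaA \<rho> (rotV c s))"
    using rotV_allowed optimal by (intro cSup_eq_maximum) auto
  moreover have "M1 \<rho> = cmod p01"
    using density_qop_entries(5)[OF assms(1)] by (simp add: M1_eq_cmod p01_def)
  ultimately show ?thesis
    using rotV_allowed optimal attained by (simp add: N_def right_diff_distrib)
qed

end
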